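(* Let $n\ge 1$ and $m\ge 2$ be integers with $m\nmid n$, and let $\ell=\lfloor n/m\rfloor$. Then the algebraic degree of $\theta_{m,k}$ is $(m-1)k+1$ for every $1\le k\le \ell$. In particular, the maps $\theta_{m,0},\theta_{m,1},\dots,\theta_{m,\ell}$ are linearly independent over $\mathbb{F}_2$ (as elements of the $\mathbb{F}_2$-vector space of all maps $\mathbb{F}_2^n\to\mathbb{F}_2^n$ under pointwise addition), and hence $\Theta_{n,m}=\{\sum_{k=0}^{\ell}a_k\theta_{m,k}: a_k\in\mathbb{F}_2\}$ is an $\mathbb{F}_2$-vector space of dimension $\ell+1$.
   Context: For $x=(x_0,\dots,x_{n-1})\in\mathbb{F}_2^n$, indices of coordinates are taken modulo $n$. For a nonnegative integer $k$, the map $\theta_{m,k}\colon\mathbb{F}_2^n\to\mathbb{F}_2^n$ is defined by $\theta_{m,k}(x)=y$ with $y_i=x_{i+mk}\prod_{1\le j\le mk-1,\ m\nmid j}(x_{i+j}+1)$ for $i\in\{0,\dots,n-1\}$ (for $k=0$ the empty product is $1$, so $\theta_{m,0}$ is the identity map). The algebraic degree of a map $\mathbb{F}_2^n\to\mathbb{F}_2^n$ is the maximum of the degrees of the algebraic normal forms of its coordinate functions. *)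

theory Defs
  imports Main "HOL-Library.Z2"
begin

text \<open>Vectors of F_2^n are modelled as functions nat => bit that vanish
  outside the index range {0..<n}; coordinate indices are taken mod n.\<close>

definition vecs :: "nat \<Rightarrow> (nat \<Rightarrow> bit) set" where
  "vecs n = {x. \<forall>i. n \<le> i \<longrightarrow> x i = 0}"

definition theta :: "nat \<Rightarrow> nat \<Rightarrow> nat \<Rightarrow> (nat \<Rightarrow> bit) \<Rightarrow> (nat \<Rightarrow> bit)" where
  "theta n m k x = (\<lambda>i. if i < n then
      x ((i + m * k) mod n) *
      (\<Prod>j\<in>{j. 1 \<le> j \<and> j \<le> m * k - 1 \<and> \<not> m dvd j}. x ((i + j) mod n) + 1)
    else 0)"

definition anf :: "nat \<Rightarrow> ((nat \<Rightarrow> bit) \<Rightarrow> bit) \<Rightarrow> nat set \<Rightarrow> bit" where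
  "anf n f = (THE a. (\<forall>S. \<not> S \<subseteq> {..<n} \<longrightarrow> a S = 0) \<and>
      (\<forall>x\<in>vecs n. f x = (\<Sum>S\<in>Pow {..<n}. a S * (\<Prod>i\<in>S. x i))))"

definition anf_degree :: "nat \<Rightarrow> ((nat \<Rightarrow> bit) \<Rightarrow> bit) \<Rightarrow> nat" where
  "anf_degree n f = Max ({card S | S. S \<subseteq> {..<n} \<and> anf n f S \<noteq> 0} \<union> {0})"

definition alg_degree :: "nat \<Rightarrow> ((nat \<Rightarrow> bit) \<Rightarrow> (nat \<Rightarrow> bit)) \<Rightarrow> nat" where
  "alg_degree n F = Max ((\<lambda>i. anf_degree n (\<lambda>x. F x i)) ` {..<n})"

definition Theta :: "nat \<Rightarrow> nat \<Rightarrow> ((nat \<Rightarrow> bit) \<Rightarrow> (nat \<Rightarrow> bit)) set" where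
  "Theta n m = {(\<lambda>x i. \<Sum>k\<le>n div m. a k * theta n m k x i) | a. True}"

end

theory Submission
  imports Defs "HOL-Library.FuncSet"
begin

text \<open>Since \<open>m k < n\<close>, coordinate \<open>i\<close> of \<open>\<theta>\<^sub>m\<^sub>,\<^sub>k\<close> is \<open>x\<^sub>i\<^sub>+\<^sub>m\<^sub>k\<close> times the product of
  \<open>x\<^sub>i\<^sub>+\<^sub>j + 1\<close> over the \<open>(m - 1) k\<close> offsets \<open>0 < j < m k\<close> not divisible by \<open>m\<close>, and all these positions
  are distinct modulo \<open>n\<close>. Expanding the product shows that the ANF consists exactly of the
  monomials \<open>x\<^sub>i\<^sub>+\<^sub>m\<^sub>k \<Prod>\<^sub>T x\<close> for \<open>T\<close> ranging over subsets of those positions, so the degree is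
  \<open>(m - 1) k + 1\<close>. Linear independence follows by evaluating coordinate \<open>0\<close> at the unit vector
  \<open>e\<^sub>m\<^sub>k\<close>, where \<open>\<theta>\<^sub>m\<^sub>,\<^sub>k\<^sub>'\<close> is \<open>1\<close> exactly when \<open>k' = k\<close>; the cardinality of \<open>\<Theta>\<^sub>n\<^sub>,\<^sub>m\<close> is then
  the number of coefficient vectors.\<close>

\<comment> \<open>Keep arithmetic on \<open>bit\<close> in ring form rather than rewriting it to XOR/AND.\<close>
declare add_bit_eq_xor [simp del] mult_bit_eq_and [simp del]

lemma bit_add_self [simp]: "(a::bit) + a = 0"
  by (cases a) simp_all

lemma bit_add_eq_0_iff: "(a::bit) + b = 0 \<longleftrightarrow> a = b"
  by (metis bit_add_self add.assoc add_0_right)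

lemma card_UNIV_bit: "card (UNIV :: bit set) = 2"
proof -
  have "(UNIV :: bit set) = {0, 1}"
    using bit.exhaust by auto
  then show ?thesis
    by (metis card_2_iff zero_neq_one)
qed

lemma anf_coeffs_eq_0:
  fixes d :: "nat set \<Rightarrow> bit"
  assumes supp: "\<And>S. \<not> S \<subseteq> {..<n} \<Longrightarrow> d S = 0"
    and zero: "\<And>x. x \<in> vecs n \<Longrightarrow> (\<Sum>S\<in>Pow {..<n}. d S * (\<Prod>i\<in>S. x i)) = 0"
  shows "d = (\<lambda>_. 0)"
proof (rule ccontr)
  assume "d \<noteq> (\<lambda>_. 0)"
  then obtain S0 where S0: "d S0 \<noteq> 0" and min: "\<And>T. d T \<noteq> 0 \<Longrightarrow> card S0 \<le> card T"
    using ex_has_least_nat[of "\<lambda>S. d S \<noteq> 0" _ card] by (metis (full_types))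
  have S0n: "S0 \<subseteq> {..<n}" and fin: "finite S0"
    using S0 supp finite_subset by blast+
  define x where "x i = (if i \<in> S0 then 1 else 0 :: bit)" for i
  have x: "x \<in> vecs n"
    using S0n by (auto simp: vecs_def x_def)
  have prod_x: "(\<Prod>i\<in>T. x i) = (if T \<subseteq> S0 then 1 else 0)" if "finite T" for T
    using that by (induction T rule: finite_induct) (auto simp: x_def)
  \<comment> \<open>Evaluated at the indicator of a minimal support set, only the coefficient of that set survives.\<close>
  have "d T * (\<Prod>i\<in>T. x i) = 0" if "T \<in> Pow {..<n} - {S0}" for T
  proof (cases "T \<subseteq> S0")
    case True
    with that have "card T < card S0"
      using fin psubset_card_mono by blast
    then show ?thesis
      using min by fastforce
  next
    case False
    have "finite T"
      using that finite_subset by blast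
    with False show ?thesis
      using prod_x by simp
  qed
  then have "(\<Sum>S\<in>Pow {..<n}. d S * (\<Prod>i\<in>S. x i)) = d S0"
    using S0n prod_x[OF fin] by (subst sum.remove[of _ S0]) (simp_all add: sum.neutral)
  with zero[OF x] S0 show False
    by simp
qed

lemma anf_eqI:
  fixes c :: "nat set \<Rightarrow> bit"
  assumes supp: "\<And>S. \<not> S \<subseteq> {..<n} \<Longrightarrow> c S = 0"
    and repr: "\<And>x. x \<in> vecs n \<Longrightarrow> f x = (\<Sum>S\<in>Pow {..<n}. c S * (\<Prod>i\<in>S. x i))"
  shows "anf n f = c"
  unfolding anf_def
proof (rule the_equality)
  fix a :: "nat set \<Rightarrow> bit"
  assume a: "(\<forall>S. \<not> S \<subseteq> {..<n} \<longrightarrow> a S = 0) \<and>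
    (\<forall>x\<in>vecs n. f x = (\<Sum>S\<in>Pow {..<n}. a S * (\<Prod>i\<in>S. x i)))"
  have "(\<lambda>S. a S + c S) = (\<lambda>_. 0)"
  proof (rule anf_coeffs_eq_0)
    fix x assume "x \<in> vecs n"
    then show "(\<Sum>S\<in>Pow {..<n}. (a S + c S) * (\<Prod>i\<in>S. x i)) = 0"
      using a repr by (simp add: distrib_right sum.distrib)
  qed (use a supp in simp)
  then show "a = c"
    by (simp add: fun_eq_iff bit_add_eq_0_iff)
qed (use assms in blast)

lemma anf_var_mult_prod_neg:
  assumes "p < n" and "Q \<subseteq> {..<n}" and "p \<notin> Q"
  shows "anf n (\<lambda>x. x p * (\<Prod>q\<in>Q. x q + 1)) = (\<lambda>S. if S \<in> insert p ` Pow Q then 1 else 0)"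
proof (rule anf_eqI)
  have fin: "finite Q"
    using assms(2) finite_subset by blast
  have sub: "insert p ` Pow Q \<subseteq> Pow {..<n}"
    using assms by auto
  then show "\<And>S. \<not> S \<subseteq> {..<n} \<Longrightarrow> (if S \<in> insert p ` Pow Q then 1 else 0) = (0::bit)"
    by auto
  have inj: "inj_on (insert p) (Pow Q)"
    using assms(3) by (intro inj_onI) (metis Pow_iff insert_ident subsetD)
  fix x :: "nat \<Rightarrow> bit"
  have "(\<Sum>S\<in>Pow {..<n}. (if S \<in> insert p ` Pow Q then 1 else 0) * (\<Prod>i\<in>S. x i))
      = (\<Sum>S\<in>insert p ` Pow Q. \<Prod>i\<in>S. x i)"
    using sum.inter_restrict[of "Pow {..<n}" "\<lambda>S. \<Prod>i\<in>S. x i" "insert p ` Pow Q"] sub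
    by (simp add: Int_absorb1) (rule sum.cong; simp)
  also have "\<dots> = (\<Sum>T\<in>Pow Q. x p * (\<Prod>i\<in>T. x i))"
  proof (simp add: sum.reindex[OF inj], rule sum.cong)
    fix T assume "T \<in> Pow Q"
    then have "finite T" and "p \<notin> T"
      using fin assms(3) finite_subset by auto
    then show "(\<Prod>i\<in>insert p T. x i) = x p * (\<Prod>i\<in>T. x i)"
      by simp
  qed simp
  also have "\<dots> = x p * (\<Prod>q\<in>Q. x q + 1)"
    using prod_add[OF fin, of x "\<lambda>_. 1"] by (simp add: sum_distrib_left)
  finally show "x p * (\<Prod>q\<in>Q. x q + 1)
      = (\<Sum>S\<in>Pow {..<n}. (if S \<in> insert p ` Pow Q then 1 else 0) * (\<Prod>i\<in>S. x i))"
    by simp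
qed

lemma anf_degree_var_mult_prod_neg:
  assumes "p < n" and "Q \<subseteq> {..<n}" and "p \<notin> Q"
  shows "anf_degree n (\<lambda>x. x p * (\<Prod>q\<in>Q. x q + 1)) = card Q + 1"
proof -
  have fin: "finite Q"
    using assms(2) finite_subset by blast
  have "{card S | S. S \<subseteq> {..<n} \<and> anf n (\<lambda>x. x p * (\<Prod>q\<in>Q. x q + 1)) S \<noteq> 0}
      = card ` insert p ` Pow Q"
    using assms by (force simp: anf_var_mult_prod_neg)
  moreover have "Max (card ` insert p ` Pow Q \<union> {0}) = card (insert p Q)"
    using fin by (intro Max_eqI) (auto intro: card_mono)
  ultimately show ?thesis
    using fin assms(3) by (simp add: anf_degree_def)
qed

definition theta_offsets :: "nat \<Rightarrow> nat \<Rightarrow> nat set" where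
  "theta_offsets m k = {j. 1 \<le> j \<and> j \<le> m * k - 1 \<and> \<not> m dvd j}"

lemma theta_offsets_subset: "theta_offsets m k \<subseteq> {..<m * k}"
  unfolding theta_offsets_def by auto

lemma theta_offsets_eq:
  assumes "0 < m"
  shows "theta_offsets m k = {..<m * k} - (\<lambda>t. m * t) ` {..<k}"
proof -
  have "0 \<in> (\<lambda>t. m * t) ` {..<k}" if "0 < m * k"
    using that by auto
  then show ?thesis
    using assms by (auto simp: theta_offsets_def Suc_le_eq elim!: dvdE)
qed

lemma card_theta_offsets: "card (theta_offsets m k) = (m - 1) * k"
proof (cases "m = 0")
  case False
  have "(\<lambda>t. m * t) ` {..<k} \<subseteq> {..<m * k}"
    using False by auto
  moreover have "card ((\<lambda>t. m * t) ` {..<k}) = k"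
    using False by (simp add: card_image inj_on_def)
  ultimately show ?thesis
    using False by (simp add: theta_offsets_eq card_Diff_subset diff_mult_distrib)
qed (auto simp: theta_offsets_def)

lemma inj_on_add_mod: "inj_on (\<lambda>j. (i + j) mod n) {..<(n::nat)}"
proof (rule inj_onI)
  fix j j' assume "j \<in> {..<n}" "j' \<in> {..<n}" "(i + j) mod n = (i + j') mod n"
  moreover from this(3) have "j mod n = j' mod n"
    by (simp add: nat_mod_eq_iff)
  ultimately show "j = j'"
    by simp
qed

lemma theta_coord_eq:
  assumes "m * k < n" and "i < n"
  defines "r \<equiv> \<lambda>j. (i + j) mod n"
  shows "theta n m k x i = x (r (m * k)) * (\<Prod>q\<in>r ` theta_offsets m k. x q + 1)"
proof -
  have "theta_offsets m k \<subseteq> {..<n}"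
    using assms(1) theta_offsets_subset by fastforce
  then have "inj_on r (theta_offsets m k)"
    unfolding r_def using inj_on_add_mod inj_on_subset by blast
  then show ?thesis
    using assms(2) by (simp add: theta_def theta_offsets_def prod.reindex r_def)
qed

lemma anf_degree_theta_coord:
  assumes "m * k < n" and "i < n"
  shows "anf_degree n (\<lambda>x. theta n m k x i) = (m - 1) * k + 1"
proof -
  let ?r = "\<lambda>j. (i + j) mod n"
  have off: "theta_offsets m k \<subseteq> {..<m * k}"
    by (rule theta_offsets_subset)
  then have "insert (m * k) (theta_offsets m k) \<subseteq> {..<n}"
    using assms(1) by auto
  then have inj: "inj_on ?r (insert (m * k) (theta_offsets m k))"
    by (rule inj_on_subset[OF inj_on_add_mod])
  have "m * k \<notin> theta_offsets m k"
    using off by auto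
  then have "?r (m * k) \<notin> ?r ` theta_offsets m k"
    by (subst inj_on_image_mem_iff[OF inj]) auto
  moreover have "?r ` theta_offsets m k \<subseteq> {..<n}" and "?r (m * k) < n"
    using assms(2) by (simp_all add: image_subset_iff)
  moreover have "card (?r ` theta_offsets m k) = (m - 1) * k"
    using inj by (simp add: card_image inj_on_insert card_theta_offsets)
  ultimately show ?thesis
    using assms by (simp add: theta_coord_eq anf_degree_var_mult_prod_neg)
qed

lemma alg_degree_theta:
  assumes "m * k < n"
  shows "alg_degree n (theta n m k) = (m - 1) * k + 1"
proof -
  have "(\<lambda>i. anf_degree n (\<lambda>x. theta n m k x i)) ` {..<n} = {(m - 1) * k + 1}"
    using assms anf_degree_theta_coord by force
  then show ?thesis
    by (simp add: alg_degree_def)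
qed

lemma theta_unit_vector:
  assumes "0 < m" and "m * k < n" and "m * k' < n"
  shows "theta n m k' (\<lambda>j. if j = m * k then 1 else 0) 0 = (if k' = k then 1 else 0)"
proof (cases "k' = k")
  case True
  have "(\<Prod>q\<in>(\<lambda>j. j mod n) ` theta_offsets m k. (if q = m * k then 1 else 0) + 1) = (1::bit)"
    using theta_offsets_subset[of m k] assms(2) by (intro prod.neutral) auto
  with True show ?thesis
    using assms theta_coord_eq[OF assms(3), of 0] by simp
next
  case False
  with assms show ?thesis
    using theta_coord_eq[OF assms(3), of 0] by simp
qed

lemma theta_linear_independent:
  assumes "0 < m" and "m * L < n"
    and zero: "\<forall>x\<in>vecs n. \<forall>i<n. (\<Sum>k\<le>L. a k * theta n m k x i) = 0"
    and "k \<le> L"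
  shows "a k = 0"
proof -
  have mk: "m * k' < n" if "k' \<le> L" for k'
    using that assms(1,2) by (meson le_less_trans mult_le_mono2)
  define x :: "nat \<Rightarrow> bit" where "x = (\<lambda>j. if j = m * k then 1 else 0)"
  have x: "x \<in> vecs n"
    using mk[OF assms(4)] by (auto simp: vecs_def x_def)
  have "a k' * theta n m k' x 0 = (if k' = k then a k else 0)" if "k' \<le> L" for k'
    using theta_unit_vector[OF assms(1) mk[OF assms(4)] mk[OF that]] by (simp add: x_def)
  then have "(\<Sum>k'\<le>L. a k' * theta n m k' x 0) = (\<Sum>k'\<le>L. if k' = k then a k else 0)"
    by (intro sum.cong) simp_all
  also have "\<dots> = a k"
    using assms(4) by simp
  finally show ?thesis
    using zero x mk[OF assms(4)] by auto
qed

lemma card_bit_combinations: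
  fixes f :: "nat \<Rightarrow> 'a \<Rightarrow> 'b \<Rightarrow> bit"
  assumes indep: "\<And>a. (\<And>x y. (\<Sum>k\<le>L. a k * f k x y) = 0) \<Longrightarrow> \<forall>k\<le>L. a k = 0"
  shows "card {(\<lambda>x y. \<Sum>k\<le>L. a k * f k x y) | a. True} = 2 ^ (L + 1)"
proof -
  define comb where "comb a = (\<lambda>x y. \<Sum>k\<le>L. a k * f k x y)" for a
  define coeffs where "coeffs = {..L} \<rightarrow>\<^sub>E (UNIV :: bit set)"
  have "{comb a | a. True} = comb ` coeffs"
  proof -
    have "comb a = comb (restrict a {..L})" for a
      by (simp add: comb_def)
    then show ?thesis
      by (auto simp: coeffs_def) (metis UNIV_I restrict_PiE_iff image_eqI)
  qed
  moreover have "inj_on comb coeffs"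
  proof (rule inj_onI)
    fix a b assume "a \<in> coeffs" "b \<in> coeffs" "comb a = comb b"
    then have "(\<Sum>k\<le>L. (a k + b k) * f k x y) = 0" for x y
      by (simp add: comb_def fun_eq_iff distrib_right sum.distrib)
    then have "\<forall>k\<le>L. a k = b k"
      using indep[of "\<lambda>k. a k + b k"] by (simp add: bit_add_eq_0_iff)
    with \<open>a \<in> coeffs\<close> \<open>b \<in> coeffs\<close> show "a = b"
      unfolding coeffs_def by (metis PiE_ext atMost_iff)
  qed
  moreover have "card coeffs = 2 ^ (L + 1)"
    by (simp add: coeffs_def card_PiE card_UNIV_bit)
  ultimately show ?thesis
    unfolding comb_def by (simp add: card_image)
qed

theorem lemma2:
  fixes n m :: nat
  assumes "n \<ge> 1" and "m \<ge> 2" and "\<not> m dvd n"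
  shows "(\<forall>k. 1 \<le> k \<and> k \<le> n div m \<longrightarrow> alg_degree n (theta n m k) = (m - 1) * k + 1)
    \<and> (\<forall>a :: nat \<Rightarrow> bit.
          (\<forall>x\<in>vecs n. \<forall>i<n. (\<Sum>k\<le>n div m. a k * theta n m k x i) = 0)
          \<longrightarrow> (\<forall>k\<le>n div m. a k = 0))
    \<and> card (Theta n m) = 2 ^ (n div m + 1)"
proof -
  let ?L = "n div m"
  have "n mod m \<noteq> 0"
    using assms(3) by (simp add: dvd_eq_mod_eq_0)
  then have mL: "m * ?L < n"
    using mult_div_mod_eq[of m n] by linarith
  have degree: "alg_degree n (theta n m k) = (m - 1) * k + 1" if "k \<le> ?L" for k
    using that mL by (intro alg_degree_theta) (meson le_less_trans mult_le_mono2)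
  have indep: "\<forall>k\<le>?L. a k = 0"
    if "\<forall>x\<in>vecs n. \<forall>i<n. (\<Sum>k\<le>?L. a k * theta n m k x i) = 0" for a
    using theta_linear_independent[OF _ mL that] assms(2) by simp
  have "card (Theta n m) = 2 ^ (?L + 1)"
    unfolding Theta_def using indep by (intro card_bit_combinations) blast
  with degree indep show ?thesis
    by blast
qed

end
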